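(* Let $1\le k\le d$ and let $p_0p_1\cdots p_k$ be a non-degenerate $k$-simplex in $\mathbb{R}^d$ with real values $\tau(p_0),\dots,\tau(p_k)$ such that $\tau(p_0)\le\tau(p_i)$ for all $i$. Let $\sigma>0$ with $\|\nabla\tau\|<\sigma$, and let $0<\varepsilon<1$. Let $F=p_1\cdots p_k$, let $\bar p_0$ be the orthogonal projection of $p_0$ onto $\operatorname{aff}(F)$, and $d_{p_0}:=|p_0\bar p_0|$. For $\delta\ge0$ let $\tau'_\delta$ be the affine function on $\operatorname{aff}(p_0\cdots p_k)$ with $\tau'_\delta(p_0)=\tau(p_0)+\delta$ and $\tau'_\delta(p_i)=\tau(p_i)$ for $i\ge1$. (1) If $\bar p_0\in F$ and $\|\nabla\tau|_F\|\le(1-\varepsilon)\sigma$, then $\|\nabla\tau'_\delta\|<\sigma$ for every $\delta\in[0,\varepsilon\, d_{p_0}\,\sigma]$. (2) If $\bar p_0\notin F$, let $u$ be the point of $F$ closest to $\bar p_0$; if $\|\nabla\tau|_F\|\le(1-\varepsilon)\,\sigma\,\sin\angle p_0u\bar p_0$, then $\|\nabla\tau'_\delta\|<\sigma$ for every $\delta\in[0,\varepsilon\, d_{p_0}\,\sigma]$.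
   Context: Given values at the vertices of a simplex, $\tau$ also denotes the affine interpolating function on the affine hull of the simplex, and $\nabla\tau$ its gradient within that affine hull (a vector parallel to the hull), with Euclidean norm $\|\cdot\|$. $\nabla\tau|_F$ is the gradient of the restriction of $\tau$ to $\operatorname{aff}(F)$ (zero if $F$ is a single point). $\operatorname{aff}$ denotes affine hull. *)

theory Defs
  imports "HOL-Analysis.Analysis"
begin

text \<open>Gradient, within the affine hull of the finite point set S, of the affine function
  interpolating the values f on S: the unique vector g parallel to aff S (i.e. in the span of
  the difference vectors of S) with g \<bullet> (x - y) = f x - f y for all x, y in S.\<close>
definition affgrad :: "'a::euclidean_space set \<Rightarrow> ('a \<Rightarrow> real) \<Rightarrow> 'a" where
  "affgrad S f = (THE g. g \<in> span {x - y | x y. x \<in> S \<and> y \<in> S} \<and>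
                         (\<forall>x\<in>S. \<forall>y\<in>S. g \<bullet> (x - y) = f x - f y))"

definition vangle :: "'a::euclidean_space \<Rightarrow> 'a \<Rightarrow> real" where
  "vangle v w = (if v = 0 \<or> w = 0 then pi / 2 else arccos ((v \<bullet> w) / (norm v * norm w)))"

definition angle3 :: "'a::euclidean_space \<Rightarrow> 'a \<Rightarrow> 'a \<Rightarrow> real" where
  "angle3 a b c = vangle (a - b) (c - b)"

end

theory Submission
  imports Defs
begin

(* Let S = {p0,...,pk} be affinely independent, q = p0 the apex and S - {q} the opposite facet,
   with foot pbar = orthogonal projection of q onto aff(S - {q}) and altitude n = q - pbar.
   The gradient g of an interpolant on S splits orthogonally as g = gF + c n, where gF is the
   gradient on the facet; raising the value at q by delta only changes c into c + delta/|n|^2.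
   Hence |g|^2 = |gF|^2 + C^2 and |g'|^2 = |gF|^2 + (C + delta/|n|)^2 with C = c |n|.
   Minimality of the apex value forces g . (q - u) <= 0 for every u in the facet, which bounds
   C |n| <= |gF| |pbar - u|.  An elementary real inequality then yields |g'| < sigma whenever
   |gF| |q - u| <= (1 - eps) sigma |n|; choosing u = pbar (foot inside the facet) or u = the point
   of the facet closest to pbar (where |n| / |q - u| is the sine of the angle at u) gives the two
   parts of the theorem. *)

(* Edge vectors of a point set; their span is the direction space of its affine hull. *)
abbreviation edge_vectors :: "'a::euclidean_space set \<Rightarrow> 'a set" where
  "edge_vectors S \<equiv> {x - y | x y. x \<in> S \<and> y \<in> S}"

lemma affine_hull_diff_in_span:
  assumes "a \<in> affine hull S" "b \<in> affine hull S"
  shows "a - b \<in> span (edge_vectors S)"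
proof -
  obtain s where s: "s \<in> S" using assms(1) affine_hull_eq_empty by blast
  let ?B = "(\<lambda>x. -s + x) ` (S - {s})"
  have B_sub: "?B \<subseteq> edge_vectors S" using s by auto
  obtain u where u: "u \<in> span ?B" "a = s + u" using assms(1) affine_hull_span2[OF s] by auto
  obtain v where v: "v \<in> span ?B" "b = s + v" using assms(2) affine_hull_span2[OF s] by auto
  have "a - b \<in> span ?B" using u v span_diff by fastforce
  then show ?thesis using span_mono[OF B_sub] by blast
qed

lemma affine_gradient_unique:
  assumes "g \<in> span (edge_vectors S)" "\<forall>x\<in>S. \<forall>y\<in>S. g \<bullet> (x - y) = f x - f y"
    and "h \<in> span (edge_vectors S)" "\<forall>x\<in>S. \<forall>y\<in>S. h \<bullet> (x - y) = f x - f y"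
  shows "g = h"
proof -
  have in_span: "g - h \<in> span (edge_vectors S)" using assms(1,3) span_diff by blast
  have "orthogonal (g - h) w" if "w \<in> edge_vectors S" for w
    using that assms(2,4) by (auto simp: orthogonal_def inner_diff_left)
  then have "orthogonal (g - h) (g - h)" using orthogonal_to_span[OF in_span] by blast
  then show ?thesis by (simp add: orthogonal_self)
qed

(* On affinely independent points any values are interpolated by an affine function:
   extend the values linearly on the independent edge vectors from a base point, represent
   the linear map by a vector and project it onto the edge span. *)
lemma affine_gradient_exists:
  assumes "\<not> affine_dependent S"
  shows "\<exists>g. g \<in> span (edge_vectors S) \<and> (\<forall>x\<in>S. \<forall>y\<in>S. g \<bullet> (x - y) = f x - f y)"
proof (cases "S = {}")
  case True
  then show ?thesis by (auto intro: span_zero)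
next
  case False
  then obtain a where a: "a \<in> S" by blast
  let ?B = "(\<lambda>x. -a + x) ` (S - {a})"
  have "independent ?B" using assms affine_dependent_iff_dependent2[OF a] by simp
  then obtain h where h: "linear h" "\<forall>b\<in>?B. h b = f (a + b) - f a"
    using linear_independent_extend[of ?B "\<lambda>b. f (a + b) - f a"] by blast
  have h_vertex: "h (-a + x) = f x - f a" if "x \<in> S" for x
    using h that by (cases "x = a") (auto simp: linear_0)
  define w where "w = adjoint h 1"
  have w: "x \<bullet> w = h x" for x using adjoint_works[OF h(1), of x 1] by (simp add: w_def)
  obtain y z where yz: "y \<in> span (edge_vectors S)"
      "\<And>v. v \<in> span (edge_vectors S) \<Longrightarrow> orthogonal z v" "w = y + z"
    by (rule orthogonal_subspace_decomp_exists[of "edge_vectors S" w]) blast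
  have "y \<bullet> (x1 - x2) = f x1 - f x2" if "x1 \<in> S" "x2 \<in> S" for x1 x2
  proof -
    have "x1 - x2 \<in> span (edge_vectors S)" using that by (intro span_base) auto
    then have "z \<bullet> (x1 - x2) = 0" using yz(2) by (simp add: orthogonal_def)
    then have "y \<bullet> (x1 - x2) = w \<bullet> (x1 - x2)" using yz(3) by (simp add: inner_add_left)
    also have "\<dots> = (-a + x1) \<bullet> w - (-a + x2) \<bullet> w"
      by (simp add: inner_diff_right inner_add_left inner_commute)
    finally have "y \<bullet> (x1 - x2) = (-a + x1) \<bullet> w - (-a + x2) \<bullet> w" .
    then show ?thesis using w h_vertex that by simp
  qed
  then show ?thesis using yz(1) by blast
qed

lemma affgrad_spec:
  assumes "\<not> affine_dependent S"
  shows "affgrad S f \<in> span (edge_vectors S)"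
    and "\<forall>x\<in>S. \<forall>y\<in>S. affgrad S f \<bullet> (x - y) = f x - f y"
proof -
  obtain g where g: "g \<in> span (edge_vectors S)" "\<forall>x\<in>S. \<forall>y\<in>S. g \<bullet> (x - y) = f x - f y"
    using affine_gradient_exists[OF assms] by blast
  have "affgrad S f = g"
    unfolding affgrad_def by (rule the_equality) (use g affine_gradient_unique[of _ S f g] in blast)+
  with g show "affgrad S f \<in> span (edge_vectors S)"
    "\<forall>x\<in>S. \<forall>y\<in>S. affgrad S f \<bullet> (x - y) = f x - f y" by auto
qed

lemma affgrad_eqI:
  assumes "\<not> affine_dependent S" "g \<in> span (edge_vectors S)"
    and "\<forall>x\<in>S. \<forall>y\<in>S. g \<bullet> (x - y) = f x - f y"
  shows "affgrad S f = g"
  using affine_gradient_unique[OF affgrad_spec[OF assms(1)] assms(2,3)] .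

(* The closest point of an affine set is the orthogonal projection: reflecting a point of the
   set through the closest point stays in the set, so both obtuse-angle inequalities hold. *)
lemma closest_point_affine_orthogonal:
  assumes "affine A" "closed A" "x \<in> A"
  shows "(a - closest_point A a) \<bullet> (x - closest_point A a) = 0"
proof -
  let ?c = "closest_point A a"
  have c: "?c \<in> A" using closest_point_in_set assms by blast
  have convex: "convex A" using assms(1) affine_imp_convex by blast
  have mirror: "2 *\<^sub>R ?c + (-1) *\<^sub>R x \<in> A"
    using mem_affine[OF assms(1) c assms(3), of 2 "-1"] by simp
  have "(a - ?c) \<bullet> (x - ?c) \<le> 0" using closest_point_dot[OF convex assms(2,3)] .
  moreover have "(a - ?c) \<bullet> ((2 *\<^sub>R ?c + (-1) *\<^sub>R x) - ?c) \<le> 0"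
    using closest_point_dot[OF convex assms(2) mirror] .
  then have "- ((a - ?c) \<bullet> (x - ?c)) \<le> 0"
    by (simp add: algebra_simps scaleR_2 inner_diff_right inner_add_right)
  ultimately show ?thesis by linarith
qed

lemma sin_angle3_right:
  fixes q u c :: "'a::euclidean_space"
  assumes right: "(q - c) \<bullet> (u - c) = 0" and "u \<noteq> c"
  shows "sin (angle3 q u c) = dist q c / dist q u"
proof -
  define a where "a = norm (c - u)"
  define L where "L = norm (q - u)"
  have q_u: "q - u = (q - c) + (c - u)" by simp
  have orth: "orthogonal (q - c) (c - u)"
    using right by (simp add: orthogonal_def inner_diff_right)
  have pyth: "L\<^sup>2 = a\<^sup>2 + (norm (q - c))\<^sup>2"
    unfolding L_def a_def q_u norm_add_Pythagorean[OF orth] by simp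
  have a_pos: "a > 0" using \<open>u \<noteq> c\<close> by (simp add: a_def)
  have "L\<^sup>2 > 0" using pyth a_pos by (simp add: add_pos_nonneg)
  then have L_pos: "L > 0" by (simp add: L_def)
  have "(q - u) \<bullet> (c - u) = (q - c) \<bullet> (c - u) + (c - u) \<bullet> (c - u)"
    unfolding q_u by (rule inner_add_left)
  also have "\<dots> = a\<^sup>2"
    using orth by (simp add: orthogonal_def a_def power2_norm_eq_inner)
  finally have "angle3 q u c = arccos (a\<^sup>2 / (L * a))"
    using a_pos L_pos unfolding angle3_def vangle_def a_def L_def by auto
  also have "a\<^sup>2 / (L * a) = a / L" using a_pos by (simp add: power2_eq_square)
  finally have angle: "angle3 q u c = arccos (a / L)" .
  have "a\<^sup>2 \<le> L\<^sup>2" using pyth by simp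
  then have "a \<le> L" using L_pos by (auto intro: power2_le_imp_le)
  then have "0 \<le> a / L" "a / L \<le> 1" using a_pos L_pos by simp_all
  then have "sin (angle3 q u c) = sqrt (1 - (a / L)\<^sup>2)"
    unfolding angle by (intro sin_arccos) linarith+
  also have "\<dots> = norm (q - c) / L"
  proof (rule real_sqrt_unique)
    have "(norm (q - c))\<^sup>2 = L\<^sup>2 - a\<^sup>2" using pyth by simp
    then show "(norm (q - c) / L)\<^sup>2 = 1 - (a / L)\<^sup>2"
      using L_pos by (simp add: power_divide diff_divide_distrib)
  qed (use L_pos in simp)
  finally show ?thesis by (simp add: L_def dist_norm)
qed

(* G is the facet gradient norm, C the normal gradient component,
   e the increase of the normal component, and a, d, L the legs and hypotenuse of a right
   triangle. *)
lemma raised_component_bound: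
  fixes G C e a d L \<sigma> \<epsilon> :: real
  assumes G: "0 \<le> G" and a: "0 \<le> a" and d: "0 < d"
    and L: "L\<^sup>2 = a\<^sup>2 + d\<^sup>2" "0 \<le> L"
    and tangential: "G * L \<le> (1 - \<epsilon>) * \<sigma> * d"
    and normal: "C * d \<le> G * a"
    and old: "G\<^sup>2 + C\<^sup>2 < \<sigma>\<^sup>2"
    and \<epsilon>: "0 < \<epsilon>" "\<epsilon> < 1" and \<sigma>: "0 < \<sigma>"
    and e: "0 \<le> e" "e \<le> \<epsilon> * \<sigma>"
  shows "G\<^sup>2 + (C + e)\<^sup>2 < \<sigma>\<^sup>2"
proof (cases "C + e \<le> 0")
  case True
  then have "(C + e)\<^sup>2 \<le> C\<^sup>2" using e by (subst abs_le_square_iff[symmetric]) auto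
  then show ?thesis using old by linarith
next
  case False
  define E where "E = \<epsilon> * \<sigma> * d"
  have E_pos: "0 < E" "E < \<sigma> * d" using \<epsilon> \<sigma> d by (simp_all add: E_def)
  have "a\<^sup>2 < L\<^sup>2" using L(1) d by simp
  then have "a < L" using L(2) by (rule power_less_imp_less_base)
  have "e * d \<le> E" using e(2) d by (simp add: E_def)
  then have "(C + e) * d \<le> G * a + E" using normal by (simp add: distrib_right)
  then have "((C + e) * d)\<^sup>2 \<le> (G * a + E)\<^sup>2" using False d by (intro power_mono) auto
  then have "(G\<^sup>2 + (C + e)\<^sup>2) * d\<^sup>2 \<le> G\<^sup>2 * L\<^sup>2 + 2 * (G * a) * E + E\<^sup>2"
    unfolding L(1) by (simp add: power2_eq_square algebra_simps)
  also have "\<dots> < (\<sigma> * d)\<^sup>2"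
  proof (cases "G = 0")
    case True
    then show ?thesis using E_pos by (simp add: power_strict_mono)
  next
    case False
    then have "G * a < G * L" using G \<open>a < L\<close> by simp
    then have "(G * a) * E < (G * L) * E" using E_pos(1) by (rule mult_strict_right_mono)
    then have "2 * (G * a) * E < 2 * (G * L) * E" by linarith
    moreover have "(G * L + E)\<^sup>2 \<le> (\<sigma> * d)\<^sup>2"
      using tangential G L(2) E_pos by (intro power_mono) (auto simp: E_def algebra_simps)
    ultimately show ?thesis by (simp add: power2_eq_square algebra_simps)
  qed
  finally show ?thesis using d by (simp add: power_mult_distrib)
qed

locale simplex_apex =
  fixes S :: "'a::euclidean_space set" and q :: 'a
  assumes indep: "\<not> affine_dependent S"
    and apex: "q \<in> S"
    and facet_nonempty: "S - {q} \<noteq> {}"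
begin

definition foot :: 'a where
  "foot = closest_point (affine hull (S - {q})) q"

definition altitude :: 'a where
  "altitude = q - foot"

lemma facet_indep: "\<not> affine_dependent (S - {q})"
  using affine_independent_subset[OF indep] by blast

lemma apex_notin_facet_hull: "q \<notin> affine hull (S - {q})"
  using indep apex unfolding affine_dependent_def by blast

lemma foot_in_facet_hull: "foot \<in> affine hull (S - {q})"
  unfolding foot_def using facet_nonempty by (intro closest_point_in_set) auto

lemma altitude_orthogonal: "x \<in> affine hull (S - {q}) \<Longrightarrow> altitude \<bullet> (x - foot) = 0"
  unfolding altitude_def foot_def
  by (rule closest_point_affine_orthogonal[OF affine_affine_hull closed_affine_hull])

lemma altitude_nonzero: "altitude \<noteq> 0"
  using foot_in_facet_hull apex_notin_facet_hull by (auto simp: altitude_def)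

lemma altitude_orthogonal_span:
  assumes "v \<in> span (edge_vectors (S - {q}))"
  shows "altitude \<bullet> v = 0"
proof -
  have "orthogonal altitude w" if w: "w \<in> edge_vectors (S - {q})" for w
  proof -
    obtain x y where xy: "w = x - y" "x \<in> S - {q}" "y \<in> S - {q}" using w by blast
    have "w = (x - foot) - (y - foot)" using xy(1) by simp
    then show ?thesis using altitude_orthogonal[OF hull_inc[OF xy(2)]] altitude_orthogonal[OF hull_inc[OF xy(3)]]
      by (simp add: orthogonal_def inner_diff_right)
  qed
  then show ?thesis using orthogonal_to_span[OF assms] by (simp add: orthogonal_def)
qed

lemma altitude_in_span: "altitude \<in> span (edge_vectors S)"
proof -
  have "foot \<in> affine hull S" using foot_in_facet_hull hull_mono[of "S - {q}" S] by blast
  then show ?thesis unfolding altitude_def by (rule affine_hull_diff_in_span[OF hull_inc[OF apex]])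
qed

lemma altitude_inner_vertex:
  assumes "z \<in> S"
  shows "altitude \<bullet> (z - q) = (if z = q then 0 else - (altitude \<bullet> altitude))"
proof (cases "z = q")
  case False
  have "z - q = (z - foot) - altitude" by (simp add: altitude_def)
  then have "altitude \<bullet> (z - q) = altitude \<bullet> (z - foot) - altitude \<bullet> altitude"
    by (metis inner_diff_right)
  then show ?thesis using False assms altitude_orthogonal[of z] by (simp add: hull_inc)
qed simp

lemma span_edges_split: "span (edge_vectors S) \<subseteq> span (insert altitude (edge_vectors (S - {q})))"
proof (rule span_minimal[OF _ subspace_span])
  let ?V = "span (insert altitude (edge_vectors (S - {q})))"
  have from_foot: "z - foot \<in> ?V" if "z \<in> S" for z
  proof (cases "z = q")
    case True then show ?thesis by (simp add: altitude_def span_base)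
  next
    case False
    then have "z \<in> affine hull (S - {q})" using that by (simp add: hull_inc)
    then have "z - foot \<in> span (edge_vectors (S - {q}))"
      using foot_in_facet_hull by (rule affine_hull_diff_in_span)
    then show ?thesis using span_mono[OF subset_insertI] by blast
  qed
  show "edge_vectors S \<subseteq> ?V"
  proof
    fix w assume "w \<in> edge_vectors S"
    then obtain x y where xy: "w = (x - foot) - (y - foot)" "x \<in> S" "y \<in> S" by auto
    show "w \<in> ?V" unfolding xy(1) using from_foot[OF xy(2)] from_foot[OF xy(3)] by (rule span_diff)
  qed
qed

lemma affgrad_split:
  "affgrad S f = affgrad (S - {q}) f
     + ((affgrad S f \<bullet> altitude) / (altitude \<bullet> altitude)) *\<^sub>R altitude"
proof -
  define g where "g = affgrad S f"
  define c where "c = (g \<bullet> altitude) / (altitude \<bullet> altitude)"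
  have "g \<in> span (insert altitude (edge_vectors (S - {q})))"
    using affgrad_spec(1)[OF indep] span_edges_split by (auto simp: g_def)
  then obtain t where t: "g - t *\<^sub>R altitude \<in> span (edge_vectors (S - {q}))"
    using span_breakdown_eq by blast
  have "g \<bullet> altitude = (g - t *\<^sub>R altitude) \<bullet> altitude + t * (altitude \<bullet> altitude)"
    by (simp add: inner_diff_left)
  then have "c = t"
    using altitude_orthogonal_span[OF t] altitude_nonzero by (simp add: c_def inner_commute)
  have "affgrad (S - {q}) f = g - c *\<^sub>R altitude"
  proof (rule affgrad_eqI[OF facet_indep])
    show "g - c *\<^sub>R altitude \<in> span (edge_vectors (S - {q}))" using t \<open>c = t\<close> by simp
    show "\<forall>x\<in>S - {q}. \<forall>y\<in>S - {q}. (g - c *\<^sub>R altitude) \<bullet> (x - y) = f x - f y"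
    proof (intro ballI)
      fix x y assume xy: "x \<in> S - {q}" "y \<in> S - {q}"
      then have "altitude \<bullet> (x - y) = 0" by (intro altitude_orthogonal_span span_base) auto
      then show "(g - c *\<^sub>R altitude) \<bullet> (x - y) = f x - f y"
        using affgrad_spec(2)[OF indep] xy by (simp add: g_def inner_diff_left)
    qed
  qed
  then show ?thesis by (simp add: g_def c_def)
qed

lemma affgrad_raise_apex:
  "affgrad S (f(q := f q + \<delta>)) = affgrad S f + (\<delta> / (altitude \<bullet> altitude)) *\<^sub>R altitude"
proof (rule affgrad_eqI[OF indep])
  show "affgrad S f + (\<delta> / (altitude \<bullet> altitude)) *\<^sub>R altitude \<in> span (edge_vectors S)"
    using affgrad_spec(1)[OF indep] altitude_in_span by (intro span_add span_mul)
  let ?s = "\<delta> / (altitude \<bullet> altitude)"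
  have raise: "?s * (altitude \<bullet> (z - q)) = (if z = q then 0 else - \<delta>)" if "z \<in> S" for z
    using altitude_inner_vertex[OF that] altitude_nonzero by simp
  show "\<forall>x\<in>S. \<forall>y\<in>S. (affgrad S f + ?s *\<^sub>R altitude) \<bullet> (x - y)
      = (f(q := f q + \<delta>)) x - (f(q := f q + \<delta>)) y"
  proof (intro ballI)
    fix x y assume xy: "x \<in> S" "y \<in> S"
    have "x - y = (x - q) - (y - q)" by simp
    then have "?s * (altitude \<bullet> (x - y)) = ?s * (altitude \<bullet> (x - q)) - ?s * (altitude \<bullet> (y - q))"
      by (metis inner_diff_right right_diff_distrib)
    then show "(affgrad S f + ?s *\<^sub>R altitude) \<bullet> (x - y)
        = (f(q := f q + \<delta>)) x - (f(q := f q + \<delta>)) y"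
      using affgrad_spec(2)[OF indep] xy raise[OF xy(1)] raise[OF xy(2)]
      by (auto simp: inner_add_left)
  qed
qed

lemma norm_facet_plus_altitude:
  "(norm (affgrad (S - {q}) f + b *\<^sub>R altitude))\<^sup>2
     = (norm (affgrad (S - {q}) f))\<^sup>2 + (b * norm altitude)\<^sup>2"
proof -
  have "orthogonal (affgrad (S - {q}) f) (b *\<^sub>R altitude)"
    using altitude_orthogonal_span[OF affgrad_spec(1)[OF facet_indep]]
    by (simp add: orthogonal_def inner_commute)
  then show ?thesis by (simp add: norm_add_Pythagorean power_mult_distrib)
qed

lemma dist_apex_sq:
  assumes "u \<in> affine hull (S - {q})"
  shows "(dist q u)\<^sup>2 = (dist foot u)\<^sup>2 + (norm altitude)\<^sup>2"
proof -
  have "orthogonal (foot - u) altitude"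
    using altitude_orthogonal[OF assms] by (simp add: orthogonal_def inner_commute inner_diff_right)
  then have "(norm ((foot - u) + altitude))\<^sup>2 = (norm (foot - u))\<^sup>2 + (norm altitude)\<^sup>2"
    by (rule norm_add_Pythagorean)
  moreover have "q - u = (foot - u) + altitude" by (simp add: altitude_def)
  ultimately show ?thesis by (simp only: dist_norm)
qed

(* If the apex carries the minimal value, the gradient points away from the apex into the
   facet: g . (q - u) <= 0 for u in the facet, which bounds the normal component by the facet
   gradient times the distance from the foot to u. *)
lemma normal_component_bound:
  assumes min: "\<forall>x\<in>S. f q \<le> f x" and u: "u \<in> convex hull (S - {q})"
  shows "affgrad S f \<bullet> altitude \<le> norm (affgrad (S - {q}) f) * dist foot u"
proof -
  define g where "g = affgrad S f"
  have "S - {q} \<subseteq> {z. g \<bullet> q \<le> g \<bullet> z}"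
  proof
    fix z assume z: "z \<in> S - {q}"
    then have "g \<bullet> (z - q) = f z - f q" using affgrad_spec(2)[OF indep] apex by (simp add: g_def)
    moreover have "f q \<le> f z" using min z by blast
    ultimately show "z \<in> {z. g \<bullet> q \<le> g \<bullet> z}" by (simp add: inner_diff_right)
  qed
  then have "convex hull (S - {q}) \<subseteq> {z. g \<bullet> q \<le> g \<bullet> z}"
    by (intro hull_minimal convex_halfspace_ge)
  then have descent: "g \<bullet> (q - u) \<le> 0" using u by (auto simp: inner_diff_right)
  have "u \<in> affine hull (S - {q})" using u convex_hull_subset_affine_hull by blast
  then have "altitude \<bullet> (foot - u) = 0" using altitude_orthogonal by (simp add: inner_diff_right)
  then have "g \<bullet> (foot - u) = affgrad (S - {q}) f \<bullet> (foot - u)"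
    unfolding g_def by (subst affgrad_split) (simp add: inner_add_left)
  moreover have "g \<bullet> (q - u) = g \<bullet> altitude + g \<bullet> (foot - u)"
    by (simp add: altitude_def inner_diff_right)
  moreover have "- (affgrad (S - {q}) f \<bullet> (foot - u)) \<le> norm (affgrad (S - {q}) f) * dist foot u"
    using norm_cauchy_schwarz[of "affgrad (S - {q}) f" "u - foot"]
    by (simp add: dist_norm norm_minus_commute inner_diff_right)
  ultimately show ?thesis using descent by (simp add: g_def)
qed

theorem raised_apex_gradient_bound:
  assumes min: "\<forall>x\<in>S. f q \<le> f x" and old: "norm (affgrad S f) < \<sigma>"
    and \<epsilon>: "0 < \<epsilon>" "\<epsilon> < 1"
    and u: "u \<in> convex hull (S - {q})"
    and tangential: "norm (affgrad (S - {q}) f) * dist q u \<le> (1 - \<epsilon>) * \<sigma> * norm altitude"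
    and \<delta>: "\<delta> \<in> {0..\<epsilon> * norm altitude * \<sigma>}"
  shows "norm (affgrad S (f(q := f q + \<delta>))) < \<sigma>"
proof -
  define G where "G = norm (affgrad (S - {q}) f)"
  define d where "d = norm altitude"
  define c where "c = (affgrad S f \<bullet> altitude) / (altitude \<bullet> altitude)"
  have d: "0 < d" using altitude_nonzero by (simp add: d_def)
  have \<sigma>: "0 < \<sigma>" using norm_ge_zero old by (rule le_less_trans)
  have alt_sq: "altitude \<bullet> altitude = d\<^sup>2" by (simp add: d_def power2_norm_eq_inner)
  have split: "affgrad S f = affgrad (S - {q}) f + c *\<^sub>R altitude"
    unfolding c_def by (rule affgrad_split)
  then have "(norm (affgrad S f))\<^sup>2 = G\<^sup>2 + (c * d)\<^sup>2"
    by (simp add: norm_facet_plus_altitude G_def d_def)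
  then have old_sq: "G\<^sup>2 + (c * d)\<^sup>2 < \<sigma>\<^sup>2"
    using power_strict_mono[OF old norm_ge_zero, of 2] by simp
  have "affgrad S (f(q := f q + \<delta>)) = affgrad (S - {q}) f + (c + \<delta> / d\<^sup>2) *\<^sub>R altitude"
    using split by (simp add: affgrad_raise_apex alt_sq scaleR_add_left)
  moreover have "(c + \<delta> / d\<^sup>2) * d = c * d + \<delta> / d" using d by (simp add: field_simps power2_eq_square)
  ultimately have new_sq: "(norm (affgrad S (f(q := f q + \<delta>))))\<^sup>2 = G\<^sup>2 + (c * d + \<delta> / d)\<^sup>2"
    by (simp add: norm_facet_plus_altitude G_def d_def)
  have "(c * d) * d = affgrad S f \<bullet> altitude" using d by (simp add: c_def alt_sq power2_eq_square)
  then have normal: "(c * d) * d \<le> G * dist foot u"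
    using normal_component_bound[OF min u] by (simp add: G_def)
  have "u \<in> affine hull (S - {q})" using u convex_hull_subset_affine_hull by blast
  then have pyth: "(dist q u)\<^sup>2 = (dist foot u)\<^sup>2 + d\<^sup>2" by (simp add: dist_apex_sq d_def)
  have e: "0 \<le> \<delta> / d" "\<delta> / d \<le> \<epsilon> * \<sigma>"
    using \<delta> d by (auto simp: divide_le_eq mult_ac d_def)
  have "G\<^sup>2 + (c * d + \<delta> / d)\<^sup>2 < \<sigma>\<^sup>2"
    using raised_component_bound[OF _ _ d pyth _ _ normal old_sq \<epsilon> \<sigma> e] tangential
    by (simp add: G_def d_def)
  then have "(norm (affgrad S (f(q := f q + \<delta>))))\<^sup>2 < \<sigma>\<^sup>2" using new_sq by simp
  then show ?thesis using \<sigma> by (simp add: power_less_imp_less_base)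
qed

corollary raised_apex_foot_inside:
  assumes min: "\<forall>x\<in>S. f q \<le> f x" and old: "norm (affgrad S f) < \<sigma>"
    and \<epsilon>: "0 < \<epsilon>" "\<epsilon> < 1"
    and inside: "foot \<in> convex hull (S - {q})"
    and facet_grad: "norm (affgrad (S - {q}) f) \<le> (1 - \<epsilon>) * \<sigma>"
    and \<delta>: "\<delta> \<in> {0..\<epsilon> * norm altitude * \<sigma>}"
  shows "norm (affgrad S (f(q := f q + \<delta>))) < \<sigma>"
proof (rule raised_apex_gradient_bound[OF min old \<epsilon> inside _ \<delta>])
  show "norm (affgrad (S - {q}) f) * dist q foot \<le> (1 - \<epsilon>) * \<sigma> * norm altitude"
    using facet_grad by (simp add: altitude_def dist_norm mult_right_mono)
qed

(* Foot outside the facet: take u the closest facet point to the foot; then the sine of the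
   angle at u is |altitude| / |q - u|. *)
corollary raised_apex_foot_outside:
  assumes min: "\<forall>x\<in>S. f q \<le> f x" and old: "norm (affgrad S f) < \<sigma>"
    and \<epsilon>: "0 < \<epsilon>" "\<epsilon> < 1"
    and outside: "foot \<notin> convex hull (S - {q})"
    and facet_grad: "norm (affgrad (S - {q}) f)
      \<le> (1 - \<epsilon>) * \<sigma> * sin (angle3 q (closest_point (convex hull (S - {q})) foot) foot)"
    and \<delta>: "\<delta> \<in> {0..\<epsilon> * norm altitude * \<sigma>}"
  shows "norm (affgrad S (f(q := f q + \<delta>))) < \<sigma>"
proof -
  define u where "u = closest_point (convex hull (S - {q})) foot"
  have "compact (convex hull (S - {q}))"
    using aff_independent_finite[OF facet_indep] by (simp add: compact_convex_hull finite_imp_compact)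
  then have u: "u \<in> convex hull (S - {q})"
    unfolding u_def using facet_nonempty by (intro closest_point_in_set compact_imp_closed) auto
  then have "u \<noteq> foot" using outside by blast
  moreover have "(q - foot) \<bullet> (u - foot) = 0"
    using altitude_orthogonal u convex_hull_subset_affine_hull by (auto simp: altitude_def)
  ultimately have sin: "sin (angle3 q u foot) = norm altitude / dist q u"
    by (simp add: sin_angle3_right altitude_def dist_norm)
  have "0 < dist q u" using u convex_hull_subset_affine_hull apex_notin_facet_hull by fastforce
  then have "norm (affgrad (S - {q}) f) * dist q u \<le> (1 - \<epsilon>) * \<sigma> * norm altitude"
    using facet_grad by (simp add: u_def[symmetric] sin pos_le_divide_eq mult_ac)
  then show ?thesis by (rule raised_apex_gradient_bound[OF min old \<epsilon> u _ \<delta>])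
qed

end

(* The theorem of the paper: the simplex p0 ... pk with apex p0 and facet F = p1 ... pk. *)
theorem mainTheorem6:
  fixes p :: "nat \<Rightarrow> 'a::euclidean_space" and k :: nat and \<tau> :: "'a \<Rightarrow> real"
    and \<sigma> \<epsilon> :: real
  assumes k1: "1 \<le> k"
    and inj: "inj_on p {0..k}"
    and nondeg: "\<not> affine_dependent (p ` {0..k})"
    and min0: "\<forall>i\<in>{0..k}. \<tau> (p 0) \<le> \<tau> (p i)"
    and sigma_pos: "\<sigma> > 0"
    and grad_lt: "norm (affgrad (p ` {0..k}) \<tau>) < \<sigma>"
    and eps: "0 < \<epsilon>" "\<epsilon> < 1"
  shows "let F = convex hull (p ` {1..k});
             pbar = closest_point (affine hull (p ` {1..k})) (p 0);
             dp0 = dist (p 0) pbar;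
             gF = norm (affgrad (p ` {1..k}) \<tau>);
             \<tau>' = (\<lambda>\<delta>::real. \<tau>(p 0 := \<tau> (p 0) + \<delta>))
         in (pbar \<in> F \<and> gF \<le> (1 - \<epsilon>) * \<sigma> \<longrightarrow>
               (\<forall>\<delta>\<in>{0..\<epsilon> * dp0 * \<sigma>}. norm (affgrad (p ` {0..k}) (\<tau>' \<delta>)) < \<sigma>))
          \<and> (pbar \<notin> F \<longrightarrow>
               (let u = closest_point F pbar in
                  gF \<le> (1 - \<epsilon>) * \<sigma> * sin (angle3 (p 0) u pbar) \<longrightarrow>
                  (\<forall>\<delta>\<in>{0..\<epsilon> * dp0 * \<sigma>}. norm (affgrad (p ` {0..k}) (\<tau>' \<delta>)) < \<sigma>)))"
proof -
  have "p 0 \<notin> p ` {1..k}"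
    using inj by (force simp: inj_on_def)
  moreover have "{0..k} = insert 0 {1..k}" by auto
  ultimately have facet: "p ` {0..k} - {p 0} = p ` {1..k}" by auto
  interpret simplex_apex "p ` {0..k}" "p 0"
    using nondeg k1 facet by unfold_locales auto
  have min: "\<forall>x\<in>p ` {0..k}. \<tau> (p 0) \<le> \<tau> x" using min0 by blast
  have foot: "closest_point (affine hull (p ` {1..k})) (p 0) = foot"
    by (simp add: foot_def facet)
  have height: "dist (p 0) foot = norm altitude" by (simp add: altitude_def dist_norm)
  show ?thesis
    unfolding Let_def foot height
    using raised_apex_foot_inside[OF min grad_lt eps] raised_apex_foot_outside[OF min grad_lt eps]
    by (simp add: facet)
qed

end
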